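(* Let $a\in C[0,1]$ satisfy: the open sets $\Omega_-:=a^{-1}((-\infty,0))$ and $\Omega_+:=a^{-1}((0,\infty))$ consist of finitely many nontrivial open intervals, $\Omega_-=\bigcup_{j=1}^r(\alpha_j,\beta_j)$ and $\Omega_+=\bigcup_{i=1}^s(\gamma_i,\varrho_i)$, $a$ vanishes at the endpoints of these intervals, and they are adjacent and interlacing (each interior interval is surrounded by two intervals of the opposite sign). For $j\in\{1,\dots,r\}$ and $\lambda\in\mathbb R$, let $\ell^{\min}_{\lambda,j}$ denote the minimal positive solution of $-u''=\lambda u+a(x)u^2$ in $(\alpha_j,\beta_j)$ subject to: $u(\alpha_j)=u(\beta_j)=\infty$ if $0<\alpha_j<\beta_j<1$; $u(0)=0$, $u(\beta_j)=\infty$ if $0=\alpha_j<\beta_j<1$; $u(\alpha_j)=\infty$, $u(1)=0$ if $0<\alpha_j<\beta_j=1$. Then for every $j\in\{1,\dots,r\}$ and every $x\in(\alpha_j,\beta_j)$, $$\lim_{\lambda\downarrow-\infty}\ell^{\min}_{\lambda,j}(x)=0,$$ uniformly on compact subsets of $(\alpha_j,\beta_j)$.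
   Context: A boundary condition $u=\infty$ at an endpoint $c$ means $u(x)\to+\infty$ as $x\to c$ from inside the interval (large/blow-up solutions). The minimal positive solution is the pointwise smallest positive solution of the corresponding singular boundary value problem; its existence is known. *)

theory Defs
  imports "HOL-Analysis.Analysis"
begin

definition pos_sol :: "(real \<Rightarrow> real) \<Rightarrow> real \<Rightarrow> real \<Rightarrow> real \<Rightarrow> (real \<Rightarrow> real) \<Rightarrow> bool" where
  "pos_sol a lam alpha beta u \<longleftrightarrow>
     (\<exists>u'. \<forall>t\<in>{alpha<..<beta}.
        (u has_real_derivative u' t) (at t) \<and>
        (u' has_real_derivative (- (lam * u t + a t * (u t)\<^sup>2))) (at t)) \<and>
     (\<forall>t\<in>{alpha<..<beta}. u t > 0) \<and>
     (if alpha = 0 then (u \<longlongrightarrow> 0) (at_right alpha)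
      else filterlim u at_top (at_right alpha)) \<and>
     (if beta = 1 then (u \<longlongrightarrow> 0) (at_left beta)
      else filterlim u at_top (at_left beta))"

definition min_pos_sol :: "(real \<Rightarrow> real) \<Rightarrow> real \<Rightarrow> real \<Rightarrow> real \<Rightarrow> (real \<Rightarrow> real) \<Rightarrow> bool" where
  "min_pos_sol a lam alpha beta u \<longleftrightarrow>
     pos_sol a lam alpha beta u \<and>
     (\<forall>v. pos_sol a lam alpha beta v \<longrightarrow> (\<forall>t\<in>{alpha<..<beta}. u t \<le> v t))"

end

theory Submission
  imports Defs "HOL-Real_Asymp.Real_Asymp"
begin

text \<open>For \<open>\<lambda> < 0\<close> a positive solution satisfies \<open>u'' = -\<lambda> u - a u\<^sup>2\<close>, and on a slightly
enlarged neighbourhood of a compact set \<open>K\<close> inside the interval where \<open>a < 0\<close> we have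
\<open>a \<le> -c < 0\<close>. Hence \<open>u'' \<ge> c u\<^sup>2\<close>, and comparison with the Keller--Osserman barrier
\<open>k/(s - A)\<^sup>2 + k/(Z - s)\<^sup>2\<close> bounds \<open>u\<close> near \<open>K\<close> by a constant \<open>M\<close> independent of \<open>\<lambda>\<close>.
Also \<open>u'' \<ge> \<mu>\<^sup>2 u\<close> with \<open>\<mu> = sqrt (-\<lambda>)\<close>, and comparison with
\<open>M (exp (-\<mu> (s - P)) + exp (\<mu> (s - Q)))\<close> gives \<open>u \<le> 2 M exp (-\<mu> r)\<close> on \<open>K\<close>, which tends
to \<open>0\<close> as \<open>\<lambda> \<rightarrow> -\<infinity>\<close>.\<close>

lemma maximum_principle_Icc:
  fixes d d' d'' :: "real \<Rightarrow> real"
  assumes "l < h"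
    and d: "\<And>s. s \<in> {l..h} \<Longrightarrow> (d has_real_derivative d' s) (at s)"
    and d': "\<And>s. s \<in> {l<..<h} \<Longrightarrow> (d' has_real_derivative d'' s) (at s)"
    and convex_where_pos: "\<And>s. s \<in> {l<..<h} \<Longrightarrow> d s > 0 \<Longrightarrow> d'' s > 0"
    and "d l \<le> 0" "d h \<le> 0"
    and "s \<in> {l..h}"
  shows "d s \<le> 0"
proof (rule ccontr)
  assume "\<not> d s \<le> 0"
  have "continuous_on {l..h} d"
    using d by (meson DERIV_continuous continuous_at_imp_continuous_on)
  moreover have "{l..h} \<noteq> {}" using \<open>l < h\<close> by simp
  ultimately obtain s0 where s0: "s0 \<in> {l..h}" and max: "\<And>y. y \<in> {l..h} \<Longrightarrow> d y \<le> d s0"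
    using continuous_attains_sup[OF compact_Icc] by blast
  have "d s0 > 0" using max[OF \<open>s \<in> {l..h}\<close>] \<open>\<not> d s \<le> 0\<close> by simp
  then have s0_inner: "s0 \<in> {l<..<h}"
    using s0 \<open>d l \<le> 0\<close> \<open>d h \<le> 0\<close> by (cases "s0 = l"; cases "s0 = h") auto
  have "d' s0 = 0"
  proof (rule DERIV_local_max[OF d[OF s0]])
    show "0 < min (s0 - l) (h - s0)" using s0_inner by simp
    show "\<forall>y. \<bar>s0 - y\<bar> < min (s0 - l) (h - s0) \<longrightarrow> d y \<le> d s0"
      by (intro allI impI max) auto
  qed
  obtain e where "e > 0" and d'_inc: "\<And>k. k > 0 \<Longrightarrow> k < e \<Longrightarrow> d' s0 < d' (s0 + k)"
    using DERIV_pos_inc_right[OF d'[OF s0_inner] convex_where_pos[OF s0_inner \<open>d s0 > 0\<close>]] by blast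
  define k where "k = min e (h - s0) / 2"
  have k: "k > 0" "k < e" "s0 + k < h" using \<open>e > 0\<close> s0_inner by (auto simp: k_def min_def field_simps)
  obtain z where z: "s0 < z" "z < s0 + k" "d (s0 + k) - d s0 = k * d' z"
    using MVT2[of s0 "s0 + k" d d'] k s0 d by auto
  have "d' z > 0" using d'_inc[of "z - s0"] z k \<open>d' s0 = 0\<close> by auto
  then have "k * d' z > 0" using k(1) by simp
  then have "d (s0 + k) > d s0" using z(3) by linarith
  moreover have "d (s0 + k) \<le> d s0" using max[of "s0 + k"] k s0 by auto
  ultimately show False by simp
qed

lemma DERIV_const_divide_power:
  fixes f :: "real \<Rightarrow> real"
  assumes f: "(f has_real_derivative f') (at x)" and "f x \<noteq> 0"
  shows "((\<lambda>s. k / f s ^ n) has_real_derivative - real n * k * f' / f x ^ Suc n) (at x)"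
proof -
  have "f x ^ n \<noteq> 0" using \<open>f x \<noteq> 0\<close> by simp
  moreover have "k * - (real n * (f' * f x ^ (n - Suc 0)) * inverse ((f x ^ n) ^ Suc (Suc 0)))
      = - real n * k * f' / f x ^ Suc n"
    using \<open>f x \<noteq> 0\<close> by (cases n) (simp_all add: field_simps)
  ultimately have "((\<lambda>s. k * inverse (f s ^ n)) has_real_derivative - real n * k * f' / f x ^ Suc n) (at x)"
    by (rule DERIV_cong[OF DERIV_cmult[OF DERIV_inverse_fun[OF DERIV_power[OF f]]]])
  then show ?thesis unfolding divide_inverse[of k] .
qed

definition ko_barrier :: "real \<Rightarrow> real \<Rightarrow> real \<Rightarrow> real \<Rightarrow> real" where
  "ko_barrier k A Z s = k / (s - A)\<^sup>2 + k / (Z - s)\<^sup>2"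

lemma ko_barrier_derivatives:
  assumes "A < s" "s < Z"
  shows "(ko_barrier k A Z has_real_derivative 2 * k / (Z - s) ^ 3 - 2 * k / (s - A) ^ 3) (at s)"
    and "((\<lambda>s. 2 * k / (Z - s) ^ 3 - 2 * k / (s - A) ^ 3)
          has_real_derivative 6 * k / (s - A) ^ 4 + 6 * k / (Z - s) ^ 4) (at s)"
proof -
  have "s - A \<noteq> 0" "Z - s \<noteq> 0" using assms by auto
  have shifts: "((\<lambda>s. s - A) has_real_derivative 1) (at s)" "((\<lambda>s. Z - s) has_real_derivative -1) (at s)"
    by (auto intro!: derivative_eq_intros)
  show "(ko_barrier k A Z has_real_derivative 2 * k / (Z - s) ^ 3 - 2 * k / (s - A) ^ 3) (at s)"
    using DERIV_add[OF DERIV_const_divide_power[OF shifts(1), where k = k and n = 2]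
                       DERIV_const_divide_power[OF shifts(2), where k = k and n = 2]]
      \<open>s - A \<noteq> 0\<close> \<open>Z - s \<noteq> 0\<close>
    unfolding ko_barrier_def by simp
  show "((\<lambda>s. 2 * k / (Z - s) ^ 3 - 2 * k / (s - A) ^ 3)
          has_real_derivative 6 * k / (s - A) ^ 4 + 6 * k / (Z - s) ^ 4) (at s)"
    using DERIV_diff[OF DERIV_const_divide_power[OF shifts(2), where k = "2 * k" and n = 3]
                        DERIV_const_divide_power[OF shifts(1), where k = "2 * k" and n = 3]]
      \<open>s - A \<noteq> 0\<close> \<open>Z - s \<noteq> 0\<close>
    by (simp add: add.commute)
qed

lemma ko_barrier_supersolution:
  assumes "c > 0" "c * k = 6"
  shows "6 * k / (s - A) ^ 4 + 6 * k / (Z - s) ^ 4 \<le> c * (ko_barrier k A Z s)\<^sup>2"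
proof -
  define x y where "x = k / (s - A)\<^sup>2" and "y = k / (Z - s)\<^sup>2"
  have "k > 0" using assms by (metis zero_less_mult_pos zero_less_numeral)
  have "c * x\<^sup>2 = 6 * k / (s - A) ^ 4" "c * y\<^sup>2 = 6 * k / (Z - s) ^ 4"
    unfolding x_def y_def using \<open>c * k = 6\<close>
    by (simp_all add: power_divide power2_eq_square power4_eq_xxxx mult.assoc[symmetric])
  moreover have "c * x * y \<ge> 0" unfolding x_def y_def using \<open>c > 0\<close> \<open>k > 0\<close> by simp
  ultimately show ?thesis
    unfolding ko_barrier_def x_def[symmetric] y_def[symmetric] by (simp add: power2_sum algebra_simps)
qed

lemma keller_osserman_bound:
  fixes u u' u'' :: "real \<Rightarrow> real"
  assumes "r > 0" "c > 0"
    and u: "\<And>s. s \<in> {P - r..P + r} \<Longrightarrow> (u has_real_derivative u' s) (at s)"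
    and u': "\<And>s. s \<in> {P - r..P + r} \<Longrightarrow> (u' has_real_derivative u'' s) (at s)"
    and pos: "\<And>s. s \<in> {P - r..P + r} \<Longrightarrow> u s > 0"
    and super: "\<And>s. s \<in> {P - r..P + r} \<Longrightarrow> u'' s \<ge> c * (u s)\<^sup>2"
  shows "u P \<le> 12 / (c * r\<^sup>2)"
proof -
  define A Z k where "A = P - r" and "Z = P + r" and "k = 6 / c"
  have k: "c * k = 6" "k > 0" using \<open>c > 0\<close> by (auto simp: k_def)
  have "continuous_on {A..Z} u"
    unfolding A_def Z_def using u by (meson DERIV_continuous continuous_at_imp_continuous_on)
  moreover have "{A..Z} \<noteq> {}" using \<open>r > 0\<close> by (simp add: A_def Z_def)
  ultimately obtain smax where "smax \<in> {A..Z}" and max: "\<And>s. s \<in> {A..Z} \<Longrightarrow> u s \<le> u smax"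
    using continuous_attains_sup[OF compact_Icc] by blast
  define B where "B = u smax"
  have "B > 0" using pos \<open>smax \<in> {A..Z}\<close> by (simp add: B_def A_def Z_def)
  \<comment> \<open>move the comparison interval inwards until the barrier exceeds \<open>B\<close> at its ends\<close>
  define \<eta> where "\<eta> = min (r / 2) (min 1 (k / B))"
  have \<eta>: "0 < \<eta>" "\<eta> < r" "\<eta> \<le> 1" "\<eta> \<le> k / B"
    using \<open>r > 0\<close> \<open>B > 0\<close> k by (auto simp: \<eta>_def)
  have "\<eta>\<^sup>2 \<le> \<eta>" using \<eta> by (simp add: power2_eq_square mult_le_cancel_left1)
  moreover have "B * \<eta> \<le> k" using \<eta>(4) \<open>B > 0\<close> by (simp add: field_simps)
  ultimately have "B * \<eta>\<^sup>2 \<le> k" using \<open>B > 0\<close> by (meson mult_left_mono order.trans less_imp_le)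
  then have "B \<le> k / \<eta>\<^sup>2" using \<eta>(1) by (simp add: field_simps)
  have barrier_ge: "k / \<eta>\<^sup>2 \<le> ko_barrier k A Z s" if "s = A + \<eta> \<or> s = Z - \<eta>" for s
    using that k by (auto simp: ko_barrier_def)
  have "u P - ko_barrier k A Z P \<le> 0"
  proof (rule maximum_principle_Icc[where d = "\<lambda>s. u s - ko_barrier k A Z s"
        and d' = "\<lambda>s. u' s - (2 * k / (Z - s) ^ 3 - 2 * k / (s - A) ^ 3)"
        and d'' = "\<lambda>s. u'' s - (6 * k / (s - A) ^ 4 + 6 * k / (Z - s) ^ 4)"])
    show "A + \<eta> < Z - \<eta>" "P \<in> {A + \<eta>..Z - \<eta>}" using \<eta> by (auto simp: A_def Z_def)
  next
    fix s assume "s \<in> {A + \<eta>..Z - \<eta>}"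
    then have "A < s" "s < Z" "s \<in> {P - r..P + r}" using \<eta> by (auto simp: A_def Z_def)
    then show "((\<lambda>s. u s - ko_barrier k A Z s) has_real_derivative
                u' s - (2 * k / (Z - s) ^ 3 - 2 * k / (s - A) ^ 3)) (at s)"
      by (intro DERIV_diff u ko_barrier_derivatives)
  next
    fix s assume "s \<in> {A + \<eta><..<Z - \<eta>}"
    then have s: "A < s" "s < Z" "s \<in> {P - r..P + r}" using \<eta> by (auto simp: A_def Z_def)
    then show "((\<lambda>s. u' s - (2 * k / (Z - s) ^ 3 - 2 * k / (s - A) ^ 3)) has_real_derivative
                u'' s - (6 * k / (s - A) ^ 4 + 6 * k / (Z - s) ^ 4)) (at s)"
      by (intro DERIV_diff u' ko_barrier_derivatives)
    assume "u s - ko_barrier k A Z s > 0"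
    moreover have "ko_barrier k A Z s \<ge> 0" using k by (simp add: ko_barrier_def)
    ultimately have "c * (ko_barrier k A Z s)\<^sup>2 < c * (u s)\<^sup>2"
      using \<open>c > 0\<close> by (simp add: power_strict_mono)
    then show "u'' s - (6 * k / (s - A) ^ 4 + 6 * k / (Z - s) ^ 4) > 0"
      using ko_barrier_supersolution[OF \<open>c > 0\<close> k(1), where s = s and A = A and Z = Z]
        super[OF s(3)] by linarith
  next
    have "A + \<eta> \<in> {A..Z}" "Z - \<eta> \<in> {A..Z}" using \<eta> by (auto simp: A_def Z_def)
    then have "u (A + \<eta>) \<le> B" "u (Z - \<eta>) \<le> B" using max unfolding B_def by blast+
    then show "u (A + \<eta>) - ko_barrier k A Z (A + \<eta>) \<le> 0" "u (Z - \<eta>) - ko_barrier k A Z (Z - \<eta>) \<le> 0"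
      using barrier_ge \<open>B \<le> k / \<eta>\<^sup>2\<close> by force+
  qed
  moreover have "ko_barrier k A Z P = 12 / (c * r\<^sup>2)"
    by (simp add: ko_barrier_def A_def Z_def k_def)
  ultimately show ?thesis by simp
qed

lemma exponential_comparison:
  fixes u u' u'' :: "real \<Rightarrow> real"
  assumes "P < Q" "\<mu> > 0" "M \<ge> 0"
    and u: "\<And>s. s \<in> {P..Q} \<Longrightarrow> (u has_real_derivative u' s) (at s)"
    and u': "\<And>s. s \<in> {P<..<Q} \<Longrightarrow> (u' has_real_derivative u'' s) (at s)"
    and super: "\<And>s. s \<in> {P<..<Q} \<Longrightarrow> u'' s \<ge> \<mu>\<^sup>2 * u s"
    and "u P \<le> M" "u Q \<le> M"
    and "s \<in> {P..Q}"
  shows "u s \<le> M * exp (- \<mu> * (s - P)) + M * exp (\<mu> * (s - Q))"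
proof -
  define w where "w s = M * exp (- \<mu> * (s - P)) + M * exp (\<mu> * (s - Q))" for s
  define w' where "w' s = - \<mu> * M * exp (- \<mu> * (s - P)) + \<mu> * M * exp (\<mu> * (s - Q))" for s
  have w: "(w has_real_derivative w' s) (at s)" for s
    unfolding w_def w'_def by (auto intro!: derivative_eq_intros)
  have w': "(w' has_real_derivative \<mu>\<^sup>2 * w s) (at s)" for s
    unfolding w_def w'_def by (auto intro!: derivative_eq_intros simp: power2_eq_square algebra_simps)
  have "u s - w s \<le> 0"
  proof (rule maximum_principle_Icc[where d = "\<lambda>s. u s - w s" and d' = "\<lambda>s. u' s - w' s" and d'' = "\<lambda>s. u'' s - \<mu>\<^sup>2 * w s"])
    show "((\<lambda>s. u s - w s) has_real_derivative u' s - w' s) (at s)" if "s \<in> {P..Q}" for s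
      using that by (intro DERIV_diff u w)
    show "((\<lambda>s. u' s - w' s) has_real_derivative u'' s - \<mu>\<^sup>2 * w s) (at s)" if "s \<in> {P<..<Q}" for s
      using that by (intro DERIV_diff u' w')
    show "u'' s - \<mu>\<^sup>2 * w s > 0" if "s \<in> {P<..<Q}" "u s - w s > 0" for s
    proof -
      have "\<mu>\<^sup>2 * w s < \<mu>\<^sup>2 * u s" using that(2) \<open>\<mu> > 0\<close> by simp
      then show ?thesis using super[OF that(1)] by linarith
    qed
    show "u P - w P \<le> 0" "u Q - w Q \<le> 0"
      using \<open>u P \<le> M\<close> \<open>u Q \<le> M\<close> \<open>M \<ge> 0\<close> by (simp_all add: w_def add_increasing add_increasing2)
  qed fact+
  then show ?thesis unfolding w_def by simp
qed

lemma positive_solution_interior_bound: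
  fixes u u' a :: "real \<Rightarrow> real"
  assumes "r > 0" "c > 0" "p \<le> q" "lam < 0"
    and u: "\<And>s. s \<in> {p - 2 * r..q + 2 * r} \<Longrightarrow> (u has_real_derivative u' s) (at s)"
    and u': "\<And>s. s \<in> {p - 2 * r..q + 2 * r} \<Longrightarrow>
               (u' has_real_derivative - (lam * u s + a s * (u s)\<^sup>2)) (at s)"
    and pos: "\<And>s. s \<in> {p - 2 * r..q + 2 * r} \<Longrightarrow> u s > 0"
    and a_neg: "\<And>s. s \<in> {p - 2 * r..q + 2 * r} \<Longrightarrow> a s \<le> - c"
    and "t \<in> {p..q}"
  shows "u t \<le> 24 / (c * r\<^sup>2) * exp (- sqrt (- lam) * r)"
proof -
  define M \<mu> where "M = 12 / (c * r\<^sup>2)" and "\<mu> = sqrt (- lam)"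
  have "M > 0" "\<mu> > 0" "\<mu>\<^sup>2 = - lam" using assms(1-4) by (auto simp: M_def \<mu>_def)
  have super_quadratic: "- (lam * u s + a s * (u s)\<^sup>2) \<ge> c * (u s)\<^sup>2"
    and super_linear: "- (lam * u s + a s * (u s)\<^sup>2) \<ge> \<mu>\<^sup>2 * u s"
    if "s \<in> {p - 2 * r..q + 2 * r}" for s
  proof -
    have "lam * u s \<le> 0" using \<open>lam < 0\<close> pos[OF that] by (simp add: mult_nonpos_nonneg)
    moreover have "a s * (u s)\<^sup>2 \<le> - c * (u s)\<^sup>2"
      using mult_right_mono[OF a_neg[OF that], of "(u s)\<^sup>2"] by simp
    moreover have "c * (u s)\<^sup>2 \<ge> 0" using \<open>c > 0\<close> by simp
    ultimately show "- (lam * u s + a s * (u s)\<^sup>2) \<ge> c * (u s)\<^sup>2"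
      and "- (lam * u s + a s * (u s)\<^sup>2) \<ge> \<mu>\<^sup>2 * u s"
      unfolding \<open>\<mu>\<^sup>2 = - lam\<close> by auto
  qed
  have "u P \<le> M" if sub: "{P - r..P + r} \<subseteq> {p - 2 * r..q + 2 * r}" for P
    unfolding M_def
    using u[OF set_mp[OF sub]] u'[OF set_mp[OF sub]] pos[OF set_mp[OF sub]]
      super_quadratic[OF set_mp[OF sub]]
    by (rule keller_osserman_bound[OF \<open>r > 0\<close> \<open>c > 0\<close>,
          where u'' = "\<lambda>s. - (lam * u s + a s * (u s)\<^sup>2)"])
  then have "u (p - r) \<le> M" "u (q + r) \<le> M" using \<open>p \<le> q\<close> by auto
  moreover have inner: "{p - r..q + r} \<subseteq> {p - 2 * r..q + 2 * r}" using \<open>r > 0\<close> by auto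
  ultimately have "u t \<le> M * exp (- \<mu> * (t - (p - r))) + M * exp (\<mu> * (t - (q + r)))"
    using \<open>p \<le> q\<close> \<open>r > 0\<close> \<open>t \<in> {p..q}\<close> \<open>M > 0\<close> \<open>\<mu> > 0\<close>
      u[OF set_mp[OF inner]] u'[OF set_mp[OF inner]] super_linear[OF set_mp[OF inner]]
    by (intro exponential_comparison[where u' = u' and u'' = "\<lambda>s. - (lam * u s + a s * (u s)\<^sup>2)"])
      simp_all
  also have "\<dots> \<le> M * exp (- \<mu> * r) + M * exp (- \<mu> * r)"
  proof -
    have "- \<mu> * (t - (p - r)) \<le> - \<mu> * r" "\<mu> * (t - (q + r)) \<le> - \<mu> * r"
      using \<open>t \<in> {p..q}\<close> \<open>\<mu> > 0\<close> by (simp_all add: mult_left_mono algebra_simps)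
    then show ?thesis using \<open>M > 0\<close> by (intro add_mono) simp_all
  qed
  finally show ?thesis by (simp add: M_def \<mu>_def)
qed

lemma pos_sol_uniform_limit_at_bot:
  fixes a :: "real \<Rightarrow> real" and ell :: "real \<Rightarrow> real \<Rightarrow> real"
  assumes cont: "continuous_on {\<alpha>..\<beta>} a"
    and neg: "\<And>t. t \<in> {\<alpha><..<\<beta>} \<Longrightarrow> a t < 0"
    and sol: "\<forall>\<^sub>F lam in at_bot. pos_sol a lam \<alpha> \<beta> (ell lam)"
    and "compact K" "K \<subseteq> {\<alpha><..<\<beta>}"
  shows "uniform_limit K ell (\<lambda>t. 0) at_bot"
proof (cases "K = {}")
  case True
  then show ?thesis by (simp add: uniform_limit_iff)
next
  case False
  obtain p q where "p \<in> K" "q \<in> K" and K: "K \<subseteq> {p..q}"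
    using compact_attains_inf[OF \<open>compact K\<close> False] compact_attains_sup[OF \<open>compact K\<close> False]
    by (metis atLeastAtMost_iff subsetI)
  then have "\<alpha> < p" "p \<le> q" "q < \<beta>" using \<open>K \<subseteq> {\<alpha><..<\<beta>}\<close> by auto
  define r where "r = min (p - \<alpha>) (\<beta> - q) / 4"
  have "r > 0" "2 * r < p - \<alpha>" "2 * r < \<beta> - q" using \<open>\<alpha> < p\<close> \<open>q < \<beta>\<close> by (auto simp: r_def)
  then have inside: "\<And>s. s \<in> {p - 2 * r..q + 2 * r} \<Longrightarrow> s \<in> {\<alpha><..<\<beta>}"
    using \<open>\<alpha> < p\<close> \<open>p \<le> q\<close> \<open>q < \<beta>\<close> by auto
  obtain c where "c > 0" and a_le: "\<And>s. s \<in> {p - 2 * r..q + 2 * r} \<Longrightarrow> a s \<le> - c"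
  proof -
    have "{p - 2 * r..q + 2 * r} \<subseteq> {\<alpha>..\<beta>}" using inside by fastforce
    then have "continuous_on {p - 2 * r..q + 2 * r} a" by (rule continuous_on_subset[OF cont])
    moreover have "{p - 2 * r..q + 2 * r} \<noteq> {}" using \<open>p \<le> q\<close> \<open>r > 0\<close> by simp
    ultimately obtain tmax where "tmax \<in> {p - 2 * r..q + 2 * r}"
      and "\<And>s. s \<in> {p - 2 * r..q + 2 * r} \<Longrightarrow> a s \<le> a tmax"
      using continuous_attains_sup[OF compact_Icc] by blast
    moreover have "a tmax < 0" using neg[OF inside[OF \<open>tmax \<in> _\<close>]] .
    ultimately show ?thesis using that[of "- a tmax"] by simp
  qed
  define bound where "bound lam = 24 / (c * r\<^sup>2) * exp (- sqrt (- lam) * r)" for lam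
  have "\<forall>\<^sub>F lam in at_bot. \<forall>t\<in>K. norm (ell lam t) \<le> bound lam"
    using sol eventually_gt_at_bot[of "0::real"]
  proof eventually_elim
    case (elim lam)
    then obtain u' where
        u: "\<And>s. s \<in> {\<alpha><..<\<beta>} \<Longrightarrow> (ell lam has_real_derivative u' s) (at s)"
      and u': "\<And>s. s \<in> {\<alpha><..<\<beta>} \<Longrightarrow>
          (u' has_real_derivative - (lam * ell lam s + a s * (ell lam s)\<^sup>2)) (at s)"
      and pos: "\<And>s. s \<in> {\<alpha><..<\<beta>} \<Longrightarrow> ell lam s > 0"
      unfolding pos_sol_def by blast
    show ?case
    proof
      fix t assume "t \<in> K"
      then have "t \<in> {p..q}" "ell lam t > 0" using K pos \<open>K \<subseteq> {\<alpha><..<\<beta>}\<close> by blast+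
      then show "norm (ell lam t) \<le> bound lam"
        using positive_solution_interior_bound[OF \<open>r > 0\<close> \<open>c > 0\<close> \<open>p \<le> q\<close> \<open>lam < 0\<close>
            u[OF inside] u'[OF inside] pos[OF inside] a_le]
        by (simp add: bound_def)
    qed
  qed
  moreover have "(bound \<longlongrightarrow> 0) at_bot"
    unfolding bound_def using \<open>r > 0\<close> by real_asymp
  then have "uniform_limit K (\<lambda>lam t. bound lam) (\<lambda>t. 0) at_bot"
    by (simp add: uniform_limit_iff tendsto_iff)
  ultimately show ?thesis by (rule uniform_limit_null_comparison)
qed

theorem corollary3p1:
  fixes a :: "real \<Rightarrow> real" and x :: "nat \<Rightarrow> real" and n :: nat and \<sigma> :: real
    and k :: nat and ell :: "real \<Rightarrow> real \<Rightarrow> real"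
  assumes cont: "continuous_on {0..1} a"
    and n2: "n \<ge> 2"
    and x0: "x 0 = 0" and xn: "x n = 1"
    and xmono: "\<And>i. i < n \<Longrightarrow> x i < x (Suc i)"
    and vanish: "\<And>i. i \<le> n \<Longrightarrow> a (x i) = 0"
    and sigma: "\<sigma> = 1 \<or> \<sigma> = -1"
    and alternate: "\<And>i t. i < n \<Longrightarrow> t \<in> {x i<..<x (Suc i)} \<Longrightarrow> sgn (a t) = \<sigma> * (-1) ^ i"
    and k: "k < n" and neg: "\<And>t. t \<in> {x k<..<x (Suc k)} \<Longrightarrow> a t < 0"
    and minsol: "\<forall>\<^sub>F lam in at_bot. min_pos_sol a lam (x k) (x (Suc k)) (ell lam)"
  shows "(\<forall>t\<in>{x k<..<x (Suc k)}. ((\<lambda>lam. ell lam t) \<longlongrightarrow> 0) at_bot) \<and>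
         (\<forall>K. compact K \<and> K \<subseteq> {x k<..<x (Suc k)} \<longrightarrow> uniform_limit K ell (\<lambda>t. 0) at_bot)"
proof -
  \<comment> \<open>clamping the index at \<open>n\<close> makes \<open>x\<close> monotone on all of \<open>nat\<close>\<close>
  have "x (min i n) \<le> x (min (Suc i) n)" for i
    using xmono[of i] by (cases "i < n") (auto simp: min_def)
  note x_mono = lift_Suc_mono_le[of "\<lambda>i. x (min i n)", OF this]
  have "x (min 0 n) \<le> x (min k n)" "x (min (Suc k) n) \<le> x (min n n)"
    using x_mono[of 0 k] x_mono[of "Suc k" n] k by simp_all
  then have "{x k..x (Suc k)} \<subseteq> {0..1}" using k x0 xn by (simp add: min_def)
  then have "continuous_on {x k..x (Suc k)} a" using continuous_on_subset[OF cont] by blast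
  moreover have "\<forall>\<^sub>F lam in at_bot. pos_sol a lam (x k) (x (Suc k)) (ell lam)"
    using minsol by (rule eventually_mono) (simp add: min_pos_sol_def)
  ultimately have uniform: "uniform_limit K ell (\<lambda>t. 0) at_bot"
    if "compact K" "K \<subseteq> {x k<..<x (Suc k)}" for K
    using pos_sol_uniform_limit_at_bot neg that by blast
  have "((\<lambda>lam. ell lam t) \<longlongrightarrow> 0) at_bot" if "t \<in> {x k<..<x (Suc k)}" for t
    using uniform[of "{t}"] that by simp
  then show ?thesis using uniform by blast
qed

end
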